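(* Consider the closed-loop system $\dot x=f^{\mathsf c}(x,w)=f(x,N(x),w)$ on $\mathbb{R}^n$ with $f^{\mathsf c}$ continuous and locally Lipschitz in $x$, and disturbance set $[\underline w,\overline w]$. Let $T\in\mathbb{R}^{n\times n}$ be invertible, $\Phi(x)=Tx$, and let $\dot y=g^{\mathsf c}(y,w):=Tf(T^{-1}y,N(T^{-1}y),w)$ be the transformed system. Let $\mathsf G^{\mathsf c}_{\mathcal S}$ be an $\mathcal S$-localized inclusion function for $g^{\mathsf c}$, let $\mathsf E_{T,\mathcal S}$ be the embedding map induced by $\mathsf G^{\mathsf c}_{\mathcal S}$, and let $[\underline y_0,\overline y_0]\subseteq\mathcal S$. If $\mathsf E_{T,\mathcal S}(\underline y_0,\overline y_0,\underline w,\overline w)\ge_{\mathrm{SE}}0$, then the paralleletope $\Phi^{-1}([\underline y_0,\overline y_0])=\{T^{-1}y:y\in[\underline y_0,\overline y_0]\}$ is a $[\underline w,\overline w]$-robustly forward invariant set for $\dot x=f^{\mathsf c}(x,w)$.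
   Context: Notation: $x\le y$ componentwise; $[\underline y,\overline y]=\{y:\underline y\le y\le\overline y\}$; $\mathcal T^{2n}_{\ge0}=\{(x,\hat x):x\le\hat x\}$; $(a,b)\ge_{\mathrm{SE}}0$ means $a\ge0$ and $b\le0$ componentwise. $y_{i:z}$ is $y$ with $i$-th entry replaced by $z_i$. An $\mathcal S$-localized inclusion function $\mathsf G=(\underline{\mathsf G},\overline{\mathsf G})$ for $g^{\mathsf c}$ satisfies $\underline{\mathsf G}(\underline y,\overline y,\underline w,\overline w)\le g^{\mathsf c}(y,w)\le\overline{\mathsf G}(\underline y,\overline y,\underline w,\overline w)$ for all $y\in[\underline y,\overline y]\subseteq\mathcal S$, $w\in[\underline w,\overline w]$. Induced embedding map: $(\underline{\mathsf E}_{T,\mathcal S})_i=(\underline{\mathsf G}(\underline y,\overline y_{i:\underline y},\underline w,\overline w))_i$, $(\overline{\mathsf E}_{T,\mathcal S})_i=(\overline{\mathsf G}(\underline y_{i:\overline y},\overline y,\underline w,\overline w))_i$. A set $\mathcal X$ is $\mathcal W$-robustly forward invariant if every solution starting in $\mathcal X$ under any piecewise continuous disturbance with values in $\mathcal W$ remains in $\mathcal X$ for all $t\ge0$. *)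

theory Defs
  imports "HOL-Analysis.Analysis"
begin

text \<open>Vectors in R^n are \<open>real^'n\<close>; the order \<open>\<le>\<close> on \<open>real^'n\<close> is componentwise,
  so \<open>{a..b}\<close> is the box [a,b].\<close>

definition vec_repl :: "real^'n \<Rightarrow> 'n \<Rightarrow> real^'n \<Rightarrow> real^'n" where
  "vec_repl y i z = (\<chi> j. if j = i then z $ i else y $ j)"

definition localized_inclusion ::
  "(real^'n) set \<Rightarrow> (real^'n \<Rightarrow> real^'m \<Rightarrow> real^'n)
   \<Rightarrow> (real^'n \<Rightarrow> real^'n \<Rightarrow> real^'m \<Rightarrow> real^'m \<Rightarrow> real^'n)
   \<Rightarrow> (real^'n \<Rightarrow> real^'n \<Rightarrow> real^'m \<Rightarrow> real^'m \<Rightarrow> real^'n) \<Rightarrow> bool" where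
  "localized_inclusion S g Gl Gu \<longleftrightarrow>
     (\<forall>yl yu wl wu. {yl..yu} \<subseteq> S \<longrightarrow>
        (\<forall>y \<in> {yl..yu}. \<forall>w \<in> {wl..wu}. Gl yl yu wl wu \<le> g y w \<and> g y w \<le> Gu yl yu wl wu))"

definition embed_lower ::
  "(real^'n \<Rightarrow> real^'n \<Rightarrow> real^'m \<Rightarrow> real^'m \<Rightarrow> real^'n)
   \<Rightarrow> real^'n \<Rightarrow> real^'n \<Rightarrow> real^'m \<Rightarrow> real^'m \<Rightarrow> real^'n" where
  "embed_lower Gl yl yu wl wu = (\<chi> i. Gl yl (vec_repl yu i yl) wl wu $ i)"

definition embed_upper ::
  "(real^'n \<Rightarrow> real^'n \<Rightarrow> real^'m \<Rightarrow> real^'m \<Rightarrow> real^'n)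
   \<Rightarrow> real^'n \<Rightarrow> real^'n \<Rightarrow> real^'m \<Rightarrow> real^'m \<Rightarrow> real^'n" where
  "embed_upper Gu yl yu wl wu = (\<chi> i. Gu (vec_repl yl i yu) yu wl wu $ i)"

definition se_nonneg :: "real^'n \<Rightarrow> real^'n \<Rightarrow> bool" where
  "se_nonneg a b \<longleftrightarrow> 0 \<le> a \<and> b \<le> 0"

definition piecewise_continuous_nonneg :: "(real \<Rightarrow> 'a::real_normed_vector) \<Rightarrow> bool" where
  "piecewise_continuous_nonneg w \<longleftrightarrow>
     (\<forall>b\<ge>0. \<exists>K. finite K \<and> (\<forall>t\<in>{0..b} - K. isCont w t)) \<and>
     (\<forall>t\<ge>0. (\<exists>l. (w \<longlongrightarrow> l) (at_right t)) \<and> (t > 0 \<longrightarrow> (\<exists>l. (w \<longlongrightarrow> l) (at_left t))))"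

text \<open>x is a (Caratheodory) solution of x' = f(x, w(t)) on [0,\<tau>].\<close>
definition is_solution ::
  "(real^'n \<Rightarrow> real^'m \<Rightarrow> real^'n) \<Rightarrow> (real \<Rightarrow> real^'m) \<Rightarrow> real \<Rightarrow> (real \<Rightarrow> real^'n) \<Rightarrow> bool" where
  "is_solution f w \<tau> x \<longleftrightarrow>
     continuous_on {0..\<tau>} x \<and>
     (\<forall>t\<in>{0..\<tau>}. (\<lambda>s. f (x s) (w s)) integrable_on {0..t} \<and>
                    x t = x 0 + integral {0..t} (\<lambda>s. f (x s) (w s)))"

definition robustly_forward_invariant ::
  "(real^'n \<Rightarrow> real^'m \<Rightarrow> real^'n) \<Rightarrow> (real^'m) set \<Rightarrow> (real^'n) set \<Rightarrow> bool" where
  "robustly_forward_invariant f W X \<longleftrightarrow>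
     (\<forall>w x \<tau>. piecewise_continuous_nonneg w \<and> (\<forall>t\<ge>0. w t \<in> W) \<and> \<tau> \<ge> 0 \<and>
        is_solution f w \<tau> x \<and> x 0 \<in> X \<longrightarrow> (\<forall>t\<in>{0..\<tau>}. x t \<in> X))"

end

theory Submission
  imports Defs
begin

text \<open>In the coordinates \<open>y = T x\<close> a trajectory solves \<open>y' = g(y, w)\<close>, and the embedding
  condition makes \<open>g\<close> point into the box \<open>[yl0, yu0]\<close> on each of its faces:
  \<open>g_i \<ge> 0\<close> where \<open>y_i = yl0_i\<close> and \<open>g_i \<le> 0\<close> where \<open>y_i = yu0_i\<close>.
  Since \<open>g\<close> is Lipschitz (constant \<open>L\<close>) on a compact set containing the trajectory and its
  projection onto the box, outside the box every coordinate of \<open>g\<close> is inward up to \<open>L\<close> times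
  the distance \<open>e\<close> to the box. Comparing each coordinate with the level of its face bounds
  \<open>e\<close> on \<open>[t0, t0 + \<delta>]\<close> by \<open>n L \<delta> sup e\<close>, which forces \<open>e = 0\<close> once \<open>n L \<delta> \<le> 1/2\<close>;
  as \<open>\<delta>\<close> depends only on \<open>L\<close>, finitely many such steps cover the whole time interval.\<close>

section \<open>Boxes and inward-pointing fields\<close>

definition clamp_box :: "real^'n \<Rightarrow> real^'n \<Rightarrow> real^'n \<Rightarrow> real^'n" where
  "clamp_box yl yu y = (\<chi> j. max (yl $ j) (min (yu $ j) (y $ j)))"

lemma clamp_box_in_box: "yl \<le> yu \<Longrightarrow> clamp_box yl yu y \<in> {yl..yu}"
  by (auto simp: clamp_box_def less_eq_vec_def)

lemma clamp_box_nth_lower: "yl \<le> yu \<Longrightarrow> y $ i \<le> yl $ i \<Longrightarrow> clamp_box yl yu y $ i = yl $ i"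
  by (auto simp: clamp_box_def less_eq_vec_def)

lemma clamp_box_nth_upper: "yl \<le> yu \<Longrightarrow> yu $ i \<le> y $ i \<Longrightarrow> clamp_box yl yu y $ i = yu $ i"
  by (auto simp: clamp_box_def less_eq_vec_def)

lemma clamp_box_nth_inside: "yl $ i \<le> y $ i \<Longrightarrow> y $ i \<le> yu $ i \<Longrightarrow> clamp_box yl yu y $ i = y $ i"
  by (simp add: clamp_box_def)

lemma dist_clamp_box_le: "dist (clamp_box yl yu a) (clamp_box yl yu b) \<le> dist a b"
  unfolding dist_norm by (rule norm_le_componentwise_cart) (auto simp: clamp_box_def)

lemma continuous_on_clamp_box: "continuous_on A (clamp_box yl yu)"
  by (rule lipschitz_on_continuous_on[of 1]) (simp add: lipschitz_onI dist_clamp_box_le)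

lemma dist_le_card_mul_if_components_le:
  fixes x y :: "real^'n"
  assumes "\<And>i. \<bar>x $ i - y $ i\<bar> \<le> B"
  shows "dist x y \<le> real CARD('n) * B"
proof -
  have "dist x y \<le> (\<Sum>i\<in>UNIV. \<bar>(x - y) $ i\<bar>)"
    unfolding dist_norm by (rule norm_le_l1_cart)
  also have "\<dots> \<le> (\<Sum>i\<in>(UNIV::'n set). B)"
    using assms by (intro sum_mono) simp
  finally show ?thesis by simp
qed

definition inward_at_faces :: "real^'n \<Rightarrow> real^'n \<Rightarrow> real^'n \<Rightarrow> real^'n \<Rightarrow> bool" where
  "inward_at_faces yl yu z v \<longleftrightarrow> (\<forall>i. (z $ i = yl $ i \<longrightarrow> 0 \<le> v $ i) \<and> (z $ i = yu $ i \<longrightarrow> v $ i \<le> 0))"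

text \<open>A velocity field that is Lipschitz in the state and points into the box on its faces
  satisfies this relaxed condition also outside the box.\<close>
definition nearly_inward :: "real \<Rightarrow> real^'n \<Rightarrow> real^'n \<Rightarrow> real^'n \<Rightarrow> real^'n \<Rightarrow> bool" where
  "nearly_inward L yl yu y v \<longleftrightarrow>
     (\<forall>i. (y $ i \<le> yl $ i \<longrightarrow> - (L * dist y (clamp_box yl yu y)) \<le> v $ i) \<and>
          (yu $ i \<le> y $ i \<longrightarrow> v $ i \<le> L * dist y (clamp_box yl yu y)))"

lemma nearly_inward_if_close_to_inward:
  assumes lu: "yl \<le> yu" and faces: "inward_at_faces yl yu (clamp_box yl yu y) v'"
    and close: "dist v v' \<le> L * dist y (clamp_box yl yu y)"
  shows "nearly_inward L yl yu y v"
proof -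
  have close_i: "\<bar>v $ i - v' $ i\<bar> \<le> L * dist y (clamp_box yl yu y)" for i
    using component_le_norm_cart[of "v - v'" i] close by (simp add: dist_norm)
  show ?thesis
    unfolding nearly_inward_def
  proof (intro allI conjI impI)
    fix i
    assume "y $ i \<le> yl $ i"
    then have "0 \<le> v' $ i"
      using faces clamp_box_nth_lower[OF lu] unfolding inward_at_faces_def by blast
    then show "- (L * dist y (clamp_box yl yu y)) \<le> v $ i"
      using close_i[of i] by linarith
  next
    fix i
    assume "yu $ i \<le> y $ i"
    then have "v' $ i \<le> 0"
      using faces clamp_box_nth_upper[OF lu] unfolding inward_at_faces_def by blast
    then show "v $ i \<le> L * dist y (clamp_box yl yu y)"
      using close_i[of i] by linarith
  qed
qed

lemma inward_at_faces_if_embedding_se_nonneg: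
  fixes g :: "real^'n \<Rightarrow> real^'m \<Rightarrow> real^'n"
  assumes incl: "localized_inclusion S g Gl Gu" and box: "{yl..yu} \<subseteq> S"
    and se: "se_nonneg (embed_lower Gl yl yu wl wu) (embed_upper Gu yl yu wl wu)"
    and z: "z \<in> {yl..yu}" and w: "w \<in> {wl..wu}"
  shows "inward_at_faces yl yu z (g z w)"
proof -
  have lu: "yl \<le> yu"
    using z order_trans[of yl z yu] by simp
  have box_sub: "{a..b} \<subseteq> S" if "yl \<le> a" "b \<le> yu" for a b
  proof -
    have "{a..b} \<subseteq> {yl..yu}" using that by simp
    then show ?thesis using box by (rule subset_trans)
  qed
  show ?thesis
    unfolding inward_at_faces_def
  proof (intro allI conjI impI)
    fix i
    \<comment> \<open>the face \<open>z $ i = yl $ i\<close> lies in the box \<open>[yl, yu_{i:yl}]\<close>, where \<open>Gl\<close> bounds \<open>g\<close> from below\<close>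
    assume zi: "z $ i = yl $ i"
    have "{yl..vec_repl yu i yl} \<subseteq> S"
      using lu by (intro box_sub) (auto simp: less_eq_vec_def vec_repl_def)
    moreover have "z \<in> {yl..vec_repl yu i yl}"
      using z zi by (auto simp: less_eq_vec_def vec_repl_def)
    ultimately have "Gl yl (vec_repl yu i yl) wl wu $ i \<le> g z w $ i"
      using incl w unfolding localized_inclusion_def less_eq_vec_def by blast
    moreover have "0 \<le> Gl yl (vec_repl yu i yl) wl wu $ i"
      using se unfolding se_nonneg_def embed_lower_def by (simp add: less_eq_vec_def)
    ultimately show "0 \<le> g z w $ i" by linarith
  next
    fix i
    assume zi: "z $ i = yu $ i"
    have "{vec_repl yl i yu..yu} \<subseteq> S"
      using lu by (intro box_sub) (auto simp: less_eq_vec_def vec_repl_def)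
    moreover have "z \<in> {vec_repl yl i yu..yu}"
      using z zi by (auto simp: less_eq_vec_def vec_repl_def)
    ultimately have "g z w $ i \<le> Gu (vec_repl yl i yu) yu wl wu $ i"
      using incl w unfolding localized_inclusion_def less_eq_vec_def by blast
    moreover have "Gu (vec_repl yl i yu) yu wl wu $ i \<le> 0"
      using se unfolding se_nonneg_def embed_upper_def by (simp add: less_eq_vec_def)
    ultimately show "g z w $ i \<le> 0" by linarith
  qed
qed

section \<open>Comparison with the faces of a box\<close>

lemma integral_barrier_lower:
  fixes u h :: "real \<Rightarrow> real"
  assumes u: "continuous_on {t0..t} u" and "t0 \<le> t"
    and h: "\<And>s. s \<in> {t0..t} \<Longrightarrow> h integrable_on {s..t} \<and> u t - u s = integral {s..t} h"
    and c: "c \<le> u t0" and K: "0 \<le> K"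
    and bound: "\<And>s. s \<in> {t0..t} \<Longrightarrow> u s \<le> c \<Longrightarrow> - K \<le> h s"
  shows "c - u t \<le> K * (t - t0)"
proof (cases "c \<le> u t")
  case True
  moreover have "0 \<le> K * (t - t0)" using K \<open>t0 \<le> t\<close> by simp
  ultimately show ?thesis by linarith
next
  case False
  define A where "A = {s \<in> {t0..t}. c \<le> u s}"
  have "closed A"
    unfolding A_def using u by (intro continuous_on_closed_Collect_le continuous_intros) auto
  moreover have "t0 \<in> A" "bdd_above A"
    using c \<open>t0 \<le> t\<close> by (auto simp: A_def intro: bdd_aboveI[of _ t])
  ultimately have "Sup A \<in> A" and t0_le: "t0 \<le> Sup A"
    using closed_contains_Sup cSup_upper by blast+
  define t1 where "t1 = Sup A"
  have t1: "t0 \<le> t1" "t1 < t" "c \<le> u t1"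
    using \<open>Sup A \<in> A\<close> t0_le False by (auto simp: t1_def A_def less_le)
  \<comment> \<open>after its last visit to the level \<open>c\<close>, \<open>u\<close> stays below it\<close>
  have "u s \<le> c" if "s \<in> {t1<..t}" for s
  proof (rule ccontr)
    assume "\<not> u s \<le> c"
    then have "s \<in> A" using that t1 by (auto simp: A_def)
    then show False using that cSup_upper[OF _ \<open>bdd_above A\<close>] by (force simp: t1_def)
  qed
  then have "{t1<..t} \<subseteq> {s \<in> {t1..t}. u s \<le> c}" by auto
  moreover have "closed {s \<in> {t1..t}. u s \<le> c}"
    using continuous_on_subset[OF u, of "{t1..t}"] t1
    by (intro continuous_on_closed_Collect_le continuous_on_const closed_atLeastAtMost) auto
  ultimately have "closure {t1<..t} \<subseteq> {s \<in> {t1..t}. u s \<le> c}"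
    by (rule closure_minimal)
  then have below: "{t1..t} \<subseteq> {s \<in> {t1..t}. u s \<le> c}"
    using t1 by simp
  have "- K * (t - t1) = integral {t1..t} (\<lambda>s. - K)"
    using t1 by simp
  also have "\<dots> \<le> integral {t1..t} h"
  proof (rule integral_le)
    show "h integrable_on {t1..t}" using h[of t1] t1 by simp
    show "- K \<le> h s" if "s \<in> {t1..t}" for s
      using below that bound[of s] t1 by auto
  qed (rule integrable_const_ivl)
  also have "\<dots> = u t - u t1"
    using h[of t1] t1 by simp
  finally have "c - u t \<le> K * (t - t1)"
    using t1 by (simp add: algebra_simps)
  also have "\<dots> \<le> K * (t - t0)"
    using K t1 by (intro mult_left_mono) auto
  finally show ?thesis .
qed

lemma integral_barrier_upper:
  fixes u h :: "real \<Rightarrow> real"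
  assumes u: "continuous_on {t0..t} u" and "t0 \<le> t"
    and h: "\<And>s. s \<in> {t0..t} \<Longrightarrow> h integrable_on {s..t} \<and> u t - u s = integral {s..t} h"
    and c: "u t0 \<le> c" and K: "0 \<le> K"
    and bound: "\<And>s. s \<in> {t0..t} \<Longrightarrow> c \<le> u s \<Longrightarrow> h s \<le> K"
  shows "u t - c \<le> K * (t - t0)"
proof -
  have "- c - (- u t) \<le> K * (t - t0)"
  proof (rule integral_barrier_lower[where u = "\<lambda>s. - u s" and h = "\<lambda>s. - h s" and c = "- c"])
    show "continuous_on {t0..t} (\<lambda>s. - u s)" using u by (intro continuous_intros)
    show "(\<lambda>s. - h s) integrable_on {s..t} \<and> - u t - - u s = integral {s..t} (\<lambda>s. - h s)"
      if "s \<in> {t0..t}" for s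
      using h[OF that] by (simp add: integrable_neg integral_neg)
  qed (use assms in auto)
  then show ?thesis by simp
qed

lemma is_solution_continuous_on: "is_solution g w \<tau> y \<Longrightarrow> continuous_on {0..\<tau>} y"
  unfolding is_solution_def by blast

lemma is_solution_component_increment:
  assumes sol: "is_solution g w \<tau> y" and s: "0 \<le> s" "s \<le> t" "t \<le> \<tau>"
  shows "(\<lambda>r. g (y r) (w r) $ i) integrable_on {s..t} \<and>
         y t $ i - y s $ i = integral {s..t} (\<lambda>r. g (y r) (w r) $ i)"
proof -
  define G where "G r = g (y r) (w r)" for r
  have sol_at: "G integrable_on {0..r} \<and> y r = y 0 + integral {0..r} G" if "r \<in> {0..\<tau>}" for r
    using sol that unfolding is_solution_def G_def by blast
  have "s \<in> {0..\<tau>}" "t \<in> {0..\<tau>}"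
    using s by simp_all
  then have int_t: "G integrable_on {0..t}"
    and eq: "y t = y 0 + integral {0..t} G" "y s = y 0 + integral {0..s} G"
    using sol_at by blast+
  have int_st: "G integrable_on {s..t}"
    using integrable_subinterval_real[OF int_t] s by simp
  have "integral {0..s} G + integral {s..t} G = integral {0..t} G"
    using Henstock_Kurzweil_Integration.integral_combine[OF s(1,2) int_t] .
  with eq have "y t - y s = integral {s..t} G"
    by (simp add: algebra_simps)
  then have "y t $ i - y s $ i = integral {s..t} (\<lambda>r. G r $ i)"
    using integral_component_eq_cart[OF int_st, of i] by (metis vector_minus_component)
  moreover have "(\<lambda>r. G r $ i) integrable_on {s..t}"
    using integrable_linear[OF int_st bounded_linear_vec_nth[of i]] by (simp add: o_def)
  ultimately show ?thesis
    unfolding G_def by blast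
qed

lemma box_excess_component_le:
  fixes y :: "real \<Rightarrow> real^'n"
  assumes sol: "is_solution g w \<tau> y" and lu: "yl \<le> yu" and L: "0 \<le> L"
    and inward: "\<And>s. s \<in> {0..\<tau>} \<Longrightarrow> nearly_inward L yl yu (y s) (g (y s) (w s))"
    and t: "0 \<le> t0" "t0 \<le> t" "t \<le> \<tau>" and yt0: "y t0 \<in> {yl..yu}"
    and M: "\<And>s. s \<in> {t0..t} \<Longrightarrow> dist (y s) (clamp_box yl yu (y s)) \<le> M"
  shows "\<bar>y t $ i - clamp_box yl yu (y t) $ i\<bar> \<le> L * M * (t - t0)"
proof -
  have "0 \<le> M"
    using order_trans[OF zero_le_dist M[of t0]] t by simp
  then have LM: "0 \<le> L * M" using L by simp
  have cont: "continuous_on {t0..t} (\<lambda>s. y s $ i)"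
    using continuous_on_subset[OF is_solution_continuous_on[OF sol], of "{t0..t}"] t
    by (auto intro: continuous_on_component)
  have incr: "(\<lambda>r. g (y r) (w r) $ i) integrable_on {s..t} \<and>
              y t $ i - y s $ i = integral {s..t} (\<lambda>r. g (y r) (w r) $ i)" if "s \<in> {t0..t}" for s
    using is_solution_component_increment[OF sol] that t by auto
  have L_dist: "L * dist (y s) (clamp_box yl yu (y s)) \<le> L * M" if "s \<in> {t0..t}" for s
    using M[OF that] L by (rule mult_left_mono)
  have inward_s: "nearly_inward L yl yu (y s) (g (y s) (w s))" if "s \<in> {t0..t}" for s
    using inward that t by auto
  consider "y t $ i < yl $ i" | "yu $ i < y t $ i" | "yl $ i \<le> y t $ i" "y t $ i \<le> yu $ i"
    by linarith
  then show ?thesis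
  proof cases
    case 1
    have "yl $ i - y t $ i \<le> L * M * (t - t0)"
    proof (rule integral_barrier_lower[OF cont t(2) incr _ LM])
      show "yl $ i \<le> y t0 $ i" using yt0 by (simp add: less_eq_vec_def)
      show "- (L * M) \<le> g (y s) (w s) $ i" if "s \<in> {t0..t}" "y s $ i \<le> yl $ i" for s
      proof -
        have "- (L * dist (y s) (clamp_box yl yu (y s))) \<le> g (y s) (w s) $ i"
          using inward_s[OF that(1)] that(2) unfolding nearly_inward_def by blast
        then show ?thesis using L_dist[OF that(1)] by linarith
      qed
    qed
    then show ?thesis using 1 lu by (simp add: clamp_box_nth_lower)
  next
    case 2
    have "y t $ i - yu $ i \<le> L * M * (t - t0)"
    proof (rule integral_barrier_upper[OF cont t(2) incr _ LM])
      show "y t0 $ i \<le> yu $ i" using yt0 by (simp add: less_eq_vec_def)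
      show "g (y s) (w s) $ i \<le> L * M" if "s \<in> {t0..t}" "yu $ i \<le> y s $ i" for s
      proof -
        have "g (y s) (w s) $ i \<le> L * dist (y s) (clamp_box yl yu (y s))"
          using inward_s[OF that(1)] that(2) unfolding nearly_inward_def by blast
        then show ?thesis using L_dist[OF that(1)] by linarith
      qed
    qed
    then show ?thesis using 2 lu by (simp add: clamp_box_nth_upper)
  next
    case 3
    then show ?thesis using LM t by (simp add: clamp_box_nth_inside)
  qed
qed

section \<open>Invariance of a box\<close>

lemma box_invariance_step:
  fixes y :: "real \<Rightarrow> real^'n"
  assumes sol: "is_solution g w \<tau> y" and lu: "yl \<le> yu" and L: "0 \<le> L"
    and inward: "\<And>s. s \<in> {0..\<tau>} \<Longrightarrow> nearly_inward L yl yu (y s) (g (y s) (w s))"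
    and t: "0 \<le> t0" "t0 \<le> t" "t \<le> \<tau>" and yt0: "y t0 \<in> {yl..yu}"
    and short: "real CARD('n) * L * (t - t0) \<le> 1 / 2"
  shows "y t \<in> {yl..yu}"
proof -
  define e where "e s = dist (y s) (clamp_box yl yu (y s))" for s
  have y: "continuous_on {t0..t} y"
    using continuous_on_subset[OF is_solution_continuous_on[OF sol]] t by simp
  then have "continuous_on {t0..t} (\<lambda>s. clamp_box yl yu (y s))"
    using continuous_on_compose2[OF continuous_on_clamp_box y subset_UNIV] by simp
  then have "continuous_on {t0..t} e"
    unfolding e_def using y by (rule continuous_on_dist[rotated])
  then have bdd: "bdd_above (e ` {t0..t})"
    by (intro bounded_imp_bdd_above compact_imp_bounded compact_continuous_image) auto
  define M where "M = Sup (e ` {t0..t})"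
  have eM: "e s \<le> M" if "s \<in> {t0..t}" for s
    unfolding M_def using bdd that by (intro cSup_upper) auto
  have "0 \<le> e t0"
    by (simp add: e_def)
  then have M0: "0 \<le> M"
    using eM[of t0] t by simp
  \<comment> \<open>the excess over the box contracts by a factor \<open>1/2\<close> on \<open>[t0, t]\<close>, so it vanishes\<close>
  have "e s \<le> M / 2" if s: "s \<in> {t0..t}" for s
  proof -
    have "\<bar>y s $ i - clamp_box yl yu (y s) $ i\<bar> \<le> L * M * (s - t0)" for i
    proof (rule box_excess_component_le[OF sol lu L inward])
      show "dist (y r) (clamp_box yl yu (y r)) \<le> M" if "r \<in> {t0..s}" for r
        using eM[of r] that s by (simp add: e_def)
    qed (use s t yt0 in auto)
    then have "e s \<le> real CARD('n) * (L * M * (s - t0))"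
      unfolding e_def by (rule dist_le_card_mul_if_components_le)
    also have "\<dots> \<le> real CARD('n) * (L * M * (t - t0))"
      using s L M0 by (intro mult_left_mono) auto
    also have "\<dots> = (real CARD('n) * L * (t - t0)) * M"
      by (simp add: ac_simps)
    also have "\<dots> \<le> M / 2"
      using mult_right_mono[OF short M0] by simp
    finally show ?thesis .
  qed
  then have "Sup (e ` {t0..t}) \<le> M / 2"
    using t by (intro cSup_least) auto
  then have "e t \<le> 0"
    using eM[of t] t M0 by (simp add: M_def)
  then have "y t = clamp_box yl yu (y t)"
    by (simp add: e_def)
  then show ?thesis
    using clamp_box_in_box[OF lu] by metis
qed

lemma box_invariance:
  fixes y :: "real \<Rightarrow> real^'n"
  assumes sol: "is_solution g w \<tau> y" and lu: "yl \<le> yu" and L: "0 \<le> L"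
    and inward: "\<And>s. s \<in> {0..\<tau>} \<Longrightarrow> nearly_inward L yl yu (y s) (g (y s) (w s))"
    and y0: "y 0 \<in> {yl..yu}" and t: "t \<in> {0..\<tau>}"
  shows "y t \<in> {yl..yu}"
proof -
  define \<delta> where "\<delta> = 1 / (2 * real CARD('n) * (L + 1))"
  have \<delta>: "0 < \<delta>"
    using L by (simp add: \<delta>_def)
  have "real CARD('n) * L * \<delta> = L / (2 * (L + 1))"
    using L by (simp add: \<delta>_def)
  also have "\<dots> \<le> 1 / 2"
    using L by (simp add: field_simps)
  finally have short: "real CARD('n) * L * \<delta> \<le> 1 / 2" .
  have "\<forall>t\<in>{0..\<tau>}. t \<le> real k * \<delta> \<longrightarrow> y t \<in> {yl..yu}" for k
  proof (induction k)
    case 0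
    then show ?case using y0 by auto
  next
    case (Suc k)
    show ?case
    proof (intro ballI impI)
      fix t assume t: "t \<in> {0..\<tau>}" "t \<le> real (Suc k) * \<delta>"
      show "y t \<in> {yl..yu}"
      proof (cases "t \<le> real k * \<delta>")
        case True
        then show ?thesis using Suc.IH t by blast
      next
        case False
        have k\<delta>: "real k * \<delta> \<in> {0..\<tau>}"
          using False t \<delta> by auto
        show ?thesis
        proof (rule box_invariance_step[OF sol lu L inward])
          show "y (real k * \<delta>) \<in> {yl..yu}"
            using Suc.IH k\<delta> by simp
          have "real CARD('n) * L * (t - real k * \<delta>) \<le> real CARD('n) * L * \<delta>"
            using t L by (intro mult_left_mono) (auto simp: algebra_simps)
          then show "real CARD('n) * L * (t - real k * \<delta>) \<le> 1 / 2"
            using short by linarith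
        qed (use False t k\<delta> in auto)
      qed
    qed
  qed
  moreover obtain k :: nat where "t / \<delta> \<le> real k"
    using real_arch_simple by blast
  then have "t \<le> real k * \<delta>"
    using \<delta> by (simp add: field_simps)
  ultimately show ?thesis using t by blast
qed

section \<open>Lipschitz vector fields\<close>

definition uniformly_lipschitz_on_compacts ::
  "('a::metric_space \<Rightarrow> 'w \<Rightarrow> 'b::metric_space) \<Rightarrow> 'w set \<Rightarrow> bool" where
  "uniformly_lipschitz_on_compacts g W \<longleftrightarrow>
     (\<forall>K. compact K \<longrightarrow> (\<exists>L. \<forall>w\<in>W. L-lipschitz_on K (\<lambda>x. g x w)))"

lemma uniformly_lipschitz_on_compacts_if_local_lipschitz:
  fixes F :: "'a::metric_space \<Rightarrow> 'w::metric_space \<Rightarrow> 'b::metric_space"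
  assumes cont: "continuous_on UNIV (\<lambda>(x, w). F x w)"
    and lip: "local_lipschitz UNIV UNIV (\<lambda>w x. F x w)" and W: "compact W"
  shows "uniformly_lipschitz_on_compacts F W"
  unfolding uniformly_lipschitz_on_compacts_def
proof (intro allI impI)
  fix K :: "'a set"
  assume K: "compact K"
  have lip_WK: "local_lipschitz W K (\<lambda>w x. F x w)"
    by (rule local_lipschitz_subset[OF lip]) simp_all
  have cont_w: "continuous_on W (\<lambda>w. F x w)" for x
    using continuous_on_compose2[OF cont continuous_on_Pair[OF continuous_on_const continuous_on_id] subset_UNIV]
    by simp
  obtain L where "\<And>w. w \<in> W \<Longrightarrow> L-lipschitz_on K (\<lambda>x. F x w)"
    using local_lipschitz_compact_implies_lipschitz[OF lip_WK K W cont_w] by blast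
  then show "\<exists>L. \<forall>w\<in>W. L-lipschitz_on K (\<lambda>x. F x w)" by blast
qed

lemma solution_stays_in_box:
  fixes g :: "real^'n \<Rightarrow> real^'m \<Rightarrow> real^'n"
  assumes sol: "is_solution g w \<tau> y" and \<tau>: "0 \<le> \<tau>" and w: "\<And>s. s \<in> {0..\<tau>} \<Longrightarrow> w s \<in> W"
    and lip: "uniformly_lipschitz_on_compacts g W"
    and faces: "\<And>z v. z \<in> {yl..yu} \<Longrightarrow> v \<in> W \<Longrightarrow> inward_at_faces yl yu z (g z v)"
    and y0: "y 0 \<in> {yl..yu}" and t: "t \<in> {0..\<tau>}"
  shows "y t \<in> {yl..yu}"
proof -
  have lu: "yl \<le> yu" using y0 by auto
  define K where "K = y ` {0..\<tau>} \<union> clamp_box yl yu ` y ` {0..\<tau>}"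
  have "continuous_on {0..\<tau>} y"
    using sol by (rule is_solution_continuous_on)
  then have "compact K"
    unfolding K_def
    by (intro compact_Un compact_continuous_image continuous_on_clamp_box) auto
  then obtain L where L: "\<And>v. v \<in> W \<Longrightarrow> L-lipschitz_on K (\<lambda>z. g z v)"
    using lip unfolding uniformly_lipschitz_on_compacts_def by blast
  have L0: "0 \<le> L"
    using L[OF w[of 0]] \<tau> by (auto intro: lipschitz_on_nonneg)
  have "nearly_inward L yl yu (y s) (g (y s) (w s))" if s: "s \<in> {0..\<tau>}" for s
  proof (rule nearly_inward_if_close_to_inward[OF lu faces[OF clamp_box_in_box[OF lu] w[OF s]]])
    show "dist (g (y s) (w s)) (g (clamp_box yl yu (y s)) (w s)) \<le> L * dist (y s) (clamp_box yl yu (y s))"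
      using s by (intro lipschitz_onD[OF L[OF w[OF s]]]) (auto simp: K_def)
  qed
  then show ?thesis
    using box_invariance[OF sol lu L0 _ y0 t] by blast
qed

section \<open>Linear changes of coordinates\<close>

lemma uniformly_lipschitz_on_compacts_linear_conjugate:
  fixes F :: "'a::real_normed_vector \<Rightarrow> 'w \<Rightarrow> 'b::real_normed_vector"
    and A :: "'b \<Rightarrow> 'c::real_normed_vector" and B :: "'d::real_normed_vector \<Rightarrow> 'a"
  assumes F: "uniformly_lipschitz_on_compacts F W"
    and A: "bounded_linear A" and B: "bounded_linear B"
  shows "uniformly_lipschitz_on_compacts (\<lambda>y w. A (F (B y) w)) W"
  unfolding uniformly_lipschitz_on_compacts_def
proof (intro allI impI)
  fix K :: "'d set"
  assume "compact K"
  then have "compact (B ` K)"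
    by (rule compact_continuous_image[OF linear_continuous_on[OF B]])
  then obtain L where L: "\<And>w. w \<in> W \<Longrightarrow> L-lipschitz_on (B ` K) (\<lambda>x. F x w)"
    using F unfolding uniformly_lipschitz_on_compacts_def by blast
  obtain CB where CB: "CB-lipschitz_on K B"
    using bounded_linear.lipschitz_boundE[OF B] by blast
  obtain CA where CA: "CA-lipschitz_on UNIV A"
    using bounded_linear.lipschitz_boundE[OF A] by blast
  have "(CA * (L * CB))-lipschitz_on K (\<lambda>y. A (F (B y) w))" if "w \<in> W" for w
  proof (rule lipschitz_on_compose2[where f = "\<lambda>y. F (B y) w" and g = A])
    show "(L * CB)-lipschitz_on K (\<lambda>y. F (B y) w)"
      using lipschitz_on_compose2[OF CB L[OF that]] .
    show "CA-lipschitz_on ((\<lambda>y. F (B y) w) ` K) A"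
      using lipschitz_on_subset[OF CA subset_UNIV] .
  qed
  then show "\<exists>L. \<forall>w\<in>W. L-lipschitz_on K (\<lambda>y. A (F (B y) w))" by blast
qed

lemma is_solution_linear_image:
  assumes sol: "is_solution F w \<tau> x" and A: "bounded_linear A" and BA: "\<And>v. B (A v) = v"
  shows "is_solution (\<lambda>y w. A (F (B y) w)) w \<tau> (\<lambda>t. A (x t))"
  unfolding is_solution_def
proof (intro conjI ballI)
  show "continuous_on {0..\<tau>} (\<lambda>t. A (x t))"
    using continuous_on_compose2[OF linear_continuous_on[OF A] is_solution_continuous_on[OF sol] subset_UNIV] .
  fix t assume t: "t \<in> {0..\<tau>}"
  have int: "(\<lambda>s. F (x s) (w s)) integrable_on {0..t}"
    and eq: "x t = x 0 + integral {0..t} (\<lambda>s. F (x s) (w s))"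
    using sol t unfolding is_solution_def by blast+
  show "(\<lambda>s. A (F (B (A (x s))) (w s))) integrable_on {0..t}"
    using integrable_linear[OF int A] by (simp add: BA o_def)
  show "A (x t) = A (x 0) + integral {0..t} (\<lambda>s. A (F (B (A (x s))) (w s)))"
    using eq integral_linear[OF int A] linear_add[OF bounded_linear.linear[OF A]] by (simp add: BA o_def)
qed

lemma matrix_inv_mult_vector_cancel:
  fixes A :: "real^'n^'n"
  assumes "invertible A"
  shows "matrix_inv A *v (A *v v) = v" and "A *v (matrix_inv A *v v) = v"
proof -
  have "A ** matrix_inv A = mat 1 \<and> matrix_inv A ** A = mat 1"
    using assms unfolding invertible_def matrix_inv_def by (rule someI_ex)
  then show "matrix_inv A *v (A *v v) = v" and "A *v (matrix_inv A *v v) = v"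
    by (simp_all add: matrix_vector_mul_assoc)
qed

theorem theorem2:
  fixes f :: "real^'n \<Rightarrow> 'u \<Rightarrow> real^'m \<Rightarrow> real^'n"
    and N :: "real^'n \<Rightarrow> 'u"
    and T :: "real^'n^'n"
    and S :: "(real^'n) set"
    and Gl Gu :: "real^'n \<Rightarrow> real^'n \<Rightarrow> real^'m \<Rightarrow> real^'m \<Rightarrow> real^'n"
    and wl wu :: "real^'m"
    and yl0 yu0 :: "real^'n"
  assumes cont: "continuous_on UNIV (\<lambda>(x, w). f x (N x) w)"
    and lip: "local_lipschitz UNIV UNIV (\<lambda>w x. f x (N x) w)"
    and inv: "invertible T"
    and incl: "localized_inclusion S
                 (\<lambda>y w. T *v f (matrix_inv T *v y) (N (matrix_inv T *v y)) w) Gl Gu"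
    and box: "{yl0..yu0} \<subseteq> S"
    and se: "se_nonneg (embed_lower Gl yl0 yu0 wl wu) (embed_upper Gu yl0 yu0 wl wu)"
  shows "robustly_forward_invariant (\<lambda>x w. f x (N x) w) {wl..wu}
           ((\<lambda>y. matrix_inv T *v y) ` {yl0..yu0})"
  unfolding robustly_forward_invariant_def
proof (intro allI impI ballI, elim conjE)
  fix w x \<tau> t
  assume w: "\<forall>t\<ge>0. w t \<in> {wl..wu}" and \<tau>: "0 \<le> \<tau>" and t: "t \<in> {0..\<tau>}"
    and sol: "is_solution (\<lambda>x w. f x (N x) w) w \<tau> x"
    and x0: "x 0 \<in> (\<lambda>y. matrix_inv T *v y) ` {yl0..yu0}"
  note cancel = matrix_inv_mult_vector_cancel[OF inv]
  let ?g = "\<lambda>y w. T *v f (matrix_inv T *v y) (N (matrix_inv T *v y)) w"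
  have sol_y: "is_solution ?g w \<tau> (\<lambda>t. T *v x t)"
    using is_solution_linear_image[OF sol matrix_vector_mul_bounded_linear cancel(1)] .
  have "compact {wl..wu}"
    by (metis compact_cbox interval_cbox_cart)
  with cont lip have lip_f: "uniformly_lipschitz_on_compacts (\<lambda>x w. f x (N x) w) {wl..wu}"
    by (rule uniformly_lipschitz_on_compacts_if_local_lipschitz)
  have lip_g: "uniformly_lipschitz_on_compacts ?g {wl..wu}"
    using uniformly_lipschitz_on_compacts_linear_conjugate[where A = "(*v) T" and B = "(*v) (matrix_inv T)",
        OF lip_f matrix_vector_mul_bounded_linear matrix_vector_mul_bounded_linear] .
  obtain y0 where y0: "y0 \<in> {yl0..yu0}" "x 0 = matrix_inv T *v y0"
    using x0 by blast
  have "T *v x t \<in> {yl0..yu0}"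
  proof (rule solution_stays_in_box[OF sol_y \<tau> _ lip_g _ _ t])
    show "w s \<in> {wl..wu}" if "s \<in> {0..\<tau>}" for s
      using w that by simp
    show "inward_at_faces yl0 yu0 z (?g z v)" if "z \<in> {yl0..yu0}" "v \<in> {wl..wu}" for z v
      using inward_at_faces_if_embedding_se_nonneg[OF incl box se that] .
    show "T *v x 0 \<in> {yl0..yu0}"
      using y0 cancel(2) by simp
  qed
  moreover have "x t = matrix_inv T *v (T *v x t)"
    using cancel(1) by simp
  ultimately show "x t \<in> (\<lambda>y. matrix_inv T *v y) ` {yl0..yu0}"
    by (rule rev_image_eqI)
qed

end
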